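(* Let $t\in\mathbb{N}$ and let $H$ be a graph whose vertex set is the union of pairwise disjoint sets $A$, $B$, $C$ such that: (1) $A$ and $B$ are independent sets, each of size $3t^2+t$; (2) $A$ and $B$ are complete to each other; (3) $|C|\ge 2$ and $H[C]$ is a path with endpoints $x$ and $y$; (4) both $x$ and $y$ have neighbours in $A\cup B$, and $C\setminus\{x,y\}$ is anticomplete to $A\cup B$; (5) $\deg_H(x)=2$; (6) $N(x)\cap(A\cup B)\neq N(y)\cap(A\cup B)$. Then $H\xrightarrow{\cap} tS_{t,t,t}$.
   Context: All graphs are finite and simple. For graphs $G_1=(V_1,E_1)$, $G_2=(V_2,E_2)$, $G_1\cap G_2=(V_1\cap V_2, E_1\cap E_2)$. For a graph $G=(V,E)$ and an injective map $\alpha$ on $V$, $G^{\alpha}$ has vertex set $\alpha(V)$ and edge set $\{\{\alpha(v),\alpha(w)\}: \{v,w\}\in E\}$. We write $G\xrightarrow{\cap} H$ if $H$ is (isomorphic to) $G^{\alpha_1}\cap\cdots\cap G^{\alpha_k}$ for some $k\ge1$ and injective maps $\alpha_1,\dots,\alpha_k$ on $V(G)$. For integers $a,b,c\ge1$, $S_{a,b,c}$ is the tree consisting of a vertex of degree $3$ together with three pendant paths having $a$, $b$, $c$ edges respectively; $tS_{t,t,t}$ is the disjoint union of $t$ copies of $S_{t,t,t}$. Sets are complete (anticomplete) to each other if all (no) edges between them are present. *)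

theory Defs
  imports Main
begin

text \<open>A graph is a pair (vertex set, edge set); edges are 2-element vertex sets.\<close>
type_synonym 'a graph = "'a set \<times> 'a set set"

definition verts :: "'a graph \<Rightarrow> 'a set" where "verts G = fst G"
definition edges :: "'a graph \<Rightarrow> 'a set set" where "edges G = snd G"

definition simple_graph :: "'a graph \<Rightarrow> bool" where
  "simple_graph G \<longleftrightarrow> finite (verts G) \<and>
     (\<forall>e\<in>edges G. \<exists>u v. u \<noteq> v \<and> e = {u, v} \<and> u \<in> verts G \<and> v \<in> verts G)"

definition graph_iso :: "'a graph \<Rightarrow> 'b graph \<Rightarrow> bool" where
  "graph_iso G H \<longleftrightarrow> (\<exists>f. bij_betw f (verts G) (verts H) \<and>
     (\<forall>e. e \<in> edges G \<longleftrightarrow> (e \<subseteq> verts G \<and> f ` e \<in> edges H)))"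

definition gimage :: "('a \<Rightarrow> 'b) \<Rightarrow> 'a graph \<Rightarrow> 'b graph" where
  "gimage \<alpha> G = (\<alpha> ` verts G, (\<lambda>e. \<alpha> ` e) ` edges G)"

definition ginter :: "'a graph \<Rightarrow> 'a graph \<Rightarrow> 'a graph" where
  "ginter G1 G2 = (verts G1 \<inter> verts G2, edges G1 \<inter> edges G2)"

definition ginter_images :: "nat \<Rightarrow> (nat \<Rightarrow> 'a \<Rightarrow> 'b) \<Rightarrow> 'a graph \<Rightarrow> 'b graph" where
  "ginter_images k \<alpha> G =
     ((\<Inter>i\<in>{..<k}. verts (gimage (\<alpha> i) G)), (\<Inter>i\<in>{..<k}. edges (gimage (\<alpha> i) G)))"

text \<open>G -\<inter>-> H. The injective maps take values in nat; since V(G) is finite,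
  any family of injections into any set can be transported into nat.\<close>
definition int_reaches :: "'a graph \<Rightarrow> 'c graph \<Rightarrow> bool" where
  "int_reaches G H \<longleftrightarrow> (\<exists>k \<ge> 1. \<exists>\<alpha> :: nat \<Rightarrow> 'a \<Rightarrow> nat.
      (\<forall>i<k. inj_on (\<alpha> i) (verts G)) \<and> graph_iso H (ginter_images k \<alpha> G))"

definition nbhd :: "'a graph \<Rightarrow> 'a \<Rightarrow> 'a set" where
  "nbhd G v = {w. {v, w} \<in> edges G}"

definition degree :: "'a graph \<Rightarrow> 'a \<Rightarrow> nat" where
  "degree G v = card (nbhd G v)"

definition induced :: "'a graph \<Rightarrow> 'a set \<Rightarrow> 'a graph" where
  "induced G S = (S, {e \<in> edges G. e \<subseteq> S})"

definition is_path_ends :: "'a graph \<Rightarrow> 'a \<Rightarrow> 'a \<Rightarrow> bool" where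
  "is_path_ends G x y \<longleftrightarrow> (\<exists>ps. ps \<noteq> [] \<and> distinct ps \<and> set ps = verts G \<and>
      hd ps = x \<and> last ps = y \<and>
      edges G = {{ps ! i, ps ! (i+1)} | i. i + 1 < length ps})"

definition independent :: "'a graph \<Rightarrow> 'a set \<Rightarrow> bool" where
  "independent G S \<longleftrightarrow> (\<forall>u\<in>S. \<forall>v\<in>S. {u, v} \<notin> edges G)"

definition complete_to :: "'a graph \<Rightarrow> 'a set \<Rightarrow> 'a set \<Rightarrow> bool" where
  "complete_to G S T \<longleftrightarrow> (\<forall>u\<in>S. \<forall>v\<in>T. {u, v} \<in> edges G)"

definition anticomplete_to :: "'a graph \<Rightarrow> 'a set \<Rightarrow> 'a set \<Rightarrow> bool" where
  "anticomplete_to G S T \<longleftrightarrow> (\<forall>u\<in>S. \<forall>v\<in>T. {u, v} \<notin> edges G)"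

text \<open>The spider S_{a,b,c}: centre (0,0); leg j \<in> {1,2,3} has vertices (j,l), 1 \<le> l \<le> len j.\<close>
definition spider :: "nat \<Rightarrow> nat \<Rightarrow> nat \<Rightarrow> (nat \<times> nat) graph" where
  "spider a b c = (let len = (\<lambda>j. if j = 1 then a else if j = 2 then b else c) in
     (insert (0,0) {(j, l). j \<in> {1,2,3} \<and> 1 \<le> l \<and> l \<le> len j},
      {{(0,0), (j,1)} | j. j \<in> {1,2,3} \<and> 1 \<le> len j} \<union>
      {{(j,l), (j,l+1)} | j l. j \<in> {1,2,3} \<and> 1 \<le> l \<and> l + 1 \<le> len j}))"

definition tSttt :: "nat \<Rightarrow> (nat \<times> nat \<times> nat) graph" where
  "tSttt t = ({(i, v) | i v. i < t \<and> v \<in> verts (spider t t t)},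
              {(\<lambda>v. (i, v)) ` e | i e. i < t \<and> e \<in> edges (spider t t t)})"

end

theory Submission
  imports Defs "HOL-Library.Nat_Bijection"
begin

(* Let ps be the path H[C] from x to y, let a be the neighbour of x in A \<union> B
  (so N(x) = {a, ps ! 1}) and let b \<noteq> a be a neighbour of y in A \<union> B. For every non-centre
  vertex u of tS_{t,t,t} there is an embedding of tS_{t,t,t} into H that lays the leg through u,
  from u outwards, along ps (so u goes to x), sends the two leg vertices flanking this stretch
  to a and b, and sends all other vertices injectively into the complete bipartite graph
  between A and B, following a 2-colouring of the forest; this fits because
  |V(tS_{t,t,t})| = 3t^2 + t. As x has no neighbours besides a and ps ! 1, such an embedding
  maps u and w to adjacent vertices only when u w is an edge, and it maps all centres into one
  independent side. The intersection of these images, relabelled so that only the common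
  copy of tS_{t,t,t} survives, is therefore tS_{t,t,t}. *)

section \<open>Intersections of embedded copies\<close>

definition graph_embedding :: "('a \<Rightarrow> 'b) \<Rightarrow> 'a graph \<Rightarrow> 'b graph \<Rightarrow> bool" where
  "graph_embedding \<phi> T H \<longleftrightarrow>
     inj_on \<phi> (verts T) \<and> \<phi> ` verts T \<subseteq> verts H \<and> (\<forall>e\<in>edges T. \<phi> ` e \<in> edges H)"

lemma simple_graph_edgeE:
  assumes "simple_graph G" "e \<in> edges G"
  obtains u v where "u \<noteq> v" "e = {u, v}" "u \<in> verts G" "v \<in> verts G"
  using assms unfolding simple_graph_def by blast

lemma simple_graph_edges_subset: "simple_graph G \<Longrightarrow> e \<in> edges G \<Longrightarrow> e \<subseteq> verts G"
  by (metis simple_graph_edgeE empty_subsetI insert_subset)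

lemma image_mem_image_edges_iff:
  assumes "simple_graph H" "inj_on \<alpha> (verts H)" "X \<subseteq> verts H"
  shows "\<alpha> ` X \<in> (`) \<alpha> ` edges H \<longleftrightarrow> X \<in> edges H"
proof
  assume "\<alpha> ` X \<in> (`) \<alpha> ` edges H"
  then obtain e where e: "e \<in> edges H" "\<alpha> ` X = \<alpha> ` e"
    by blast
  moreover have "e \<subseteq> verts H"
    using assms(1) e(1) by (rule simple_graph_edges_subset)
  ultimately show "X \<in> edges H"
    using inj_on_image_eq_iff[OF assms(2,3)] by simp
qed simp

lemma edges_eq_if_separating_embeddings:
  assumes T: "simple_graph T" and H: "simple_graph H" and k: "0 < k"
    and emb: "\<And>m. m < k \<Longrightarrow> graph_embedding (\<psi> m) T H"
    and sep: "\<And>u v. u \<in> verts T \<Longrightarrow> v \<in> verts T \<Longrightarrow> u \<noteq> v \<Longrightarrow> {u, v} \<notin> edges T \<Longrightarrow>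
      \<exists>m<k. {\<psi> m u, \<psi> m v} \<notin> edges H"
  shows "e \<in> edges T \<longleftrightarrow> e \<subseteq> verts T \<and> (\<forall>m<k. \<psi> m ` e \<in> edges H)"
proof
  assume "e \<in> edges T"
  then show "e \<subseteq> verts T \<and> (\<forall>m<k. \<psi> m ` e \<in> edges H)"
    using T emb by (auto simp: graph_embedding_def dest: simple_graph_edges_subset)
next
  assume e: "e \<subseteq> verts T \<and> (\<forall>m<k. \<psi> m ` e \<in> edges H)"
  then obtain g g' where gg': "g \<noteq> g'" "\<psi> 0 ` e = {g, g'}"
    using H k by (meson simple_graph_edgeE)
  then have "g \<in> \<psi> 0 ` e" "g' \<in> \<psi> 0 ` e" by auto
  then obtain u v where uv: "u \<in> e" "v \<in> e" "g = \<psi> 0 u" "g' = \<psi> 0 v"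
    by blast
  have "inj_on (\<psi> 0) e"
    using emb[OF k] e by (auto simp: graph_embedding_def intro: inj_on_subset)
  with uv gg' have e_uv: "e = {u, v}"
    using inj_on_image_eq_iff[of "\<psi> 0" e e "{u, v}"] by simp
  have "u \<noteq> v" using uv gg' by blast
  show "e \<in> edges T"
  proof (rule ccontr)
    assume "e \<notin> edges T"
    then obtain m where "m < k" "{\<psi> m u, \<psi> m v} \<notin> edges H"
      using sep[of u v] e e_uv \<open>u \<noteq> v\<close> by auto
    with e e_uv show False by auto
  qed
qed

lemma graph_iso_ginter_images:
  assumes T: "simple_graph T" and H: "simple_graph H" and k: "0 < k"
    and emb: "\<And>m. m < k \<Longrightarrow> graph_embedding (\<psi> m) T H"
    and sep: "\<And>u v. u \<in> verts T \<Longrightarrow> v \<in> verts T \<Longrightarrow> u \<noteq> v \<Longrightarrow> {u, v} \<notin> edges T \<Longrightarrow>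
      \<exists>m<k. {\<psi> m u, \<psi> m v} \<notin> edges H"
    and inj_f: "inj_on f (verts T)"
    and inj_\<alpha>: "\<And>m. m < k \<Longrightarrow> inj_on (\<alpha> m) (verts H)"
    and \<alpha>_\<psi>: "\<And>m v. m < k \<Longrightarrow> v \<in> verts T \<Longrightarrow> \<alpha> m (\<psi> m v) = f v"
    and common: "(\<Inter>m<k. \<alpha> m ` verts H) \<subseteq> f ` verts T"
  shows "graph_iso T (ginter_images k \<alpha> H)"
proof -
  have f_\<alpha>: "f ` X = \<alpha> m ` \<psi> m ` X" if "m < k" "X \<subseteq> verts T" for m X
    unfolding image_image using that by (intro image_cong) (auto simp: \<alpha>_\<psi>)
  have "f ` verts T \<subseteq> \<alpha> m ` verts H" if "m < k" for m
    using f_\<alpha>[OF that order_refl] emb[OF that] by (auto simp: graph_embedding_def)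
  with common have verts_eq: "(\<Inter>m<k. \<alpha> m ` verts H) = f ` verts T"
    by blast
  have edge_iff: "f ` e \<in> (`) (\<alpha> m) ` edges H \<longleftrightarrow> \<psi> m ` e \<in> edges H"
    if "m < k" "e \<subseteq> verts T" for m e
    unfolding f_\<alpha>[OF that] using H inj_\<alpha>[OF that(1)] emb[OF that(1)] that(2)
    by (intro image_mem_image_edges_iff) (auto simp: graph_embedding_def)
  have "verts (ginter_images k \<alpha> H) = (\<Inter>m<k. \<alpha> m ` verts H)"
    and "edges (ginter_images k \<alpha> H) = (\<Inter>m<k. (`) (\<alpha> m) ` edges H)"
    by (simp_all add: ginter_images_def gimage_def verts_def edges_def)
  then show ?thesis
    unfolding graph_iso_def
    using verts_eq inj_f edge_iff edges_eq_if_separating_embeddings[OF T H k emb sep]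
    by (intro exI[of _ f]) (auto simp: bij_betw_def)
qed

(* Labels of vertices outside the copy \<psi> m are odd and record m, so a common label of two
  of the labellings is always the label f v of a vertex v of T. *)
lemma obtain_common_labelling:
  fixes \<psi> :: "nat \<Rightarrow> 'b \<Rightarrow> 'a"
  assumes fin_T: "finite (verts T)" and fin_H: "finite (verts H)" and k: "2 \<le> k"
    and inj_\<psi>: "\<And>m. m < k \<Longrightarrow> inj_on (\<psi> m) (verts T)"
  obtains f :: "'b \<Rightarrow> nat" and \<alpha> :: "nat \<Rightarrow> 'a \<Rightarrow> nat"
  where "inj_on f (verts T)" "\<forall>m<k. inj_on (\<alpha> m) (verts H)"
    "\<forall>m<k. \<forall>v\<in>verts T. \<alpha> m (\<psi> m v) = f v"
    "(\<Inter>m<k. \<alpha> m ` verts H) \<subseteq> f ` verts T"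
proof -
  obtain en :: "'b \<Rightarrow> nat" where en: "inj_on en (verts T)"
    using finite_imp_inj_to_nat_seg[OF fin_T] by blast
  obtain hn :: "'a \<Rightarrow> nat" where hn: "inj_on hn (verts H)"
    using finite_imp_inj_to_nat_seg[OF fin_H] by blast
  define f where "f v = 2 * en v" for v
  define \<alpha> where "\<alpha> m h = (if h \<in> \<psi> m ` verts T then f (the_inv_into (verts T) (\<psi> m) h)
      else Suc (2 * prod_encode (m, hn h)))" for m h
  have inj_f: "inj_on f (verts T)"
    using en by (auto simp: inj_on_def f_def)
  have \<alpha>_\<psi>: "\<alpha> m (\<psi> m v) = f v" if "m < k" "v \<in> verts T" for m v
    using that inj_\<psi> by (simp add: \<alpha>_def the_inv_into_f_f)
  have inj_\<alpha>: "inj_on (\<alpha> m) (verts H)" if "m < k" for m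
  proof -
    have "inj_on (\<lambda>h. f (the_inv_into (verts T) (\<psi> m) h)) (\<psi> m ` verts T)"
      using inj_f inj_\<psi>[OF that] comp_inj_on[of "the_inv_into (verts T) (\<psi> m)" _ f]
      by (simp add: inj_on_the_inv_into the_inv_into_onto o_def)
    moreover have "inj_on (\<lambda>h. Suc (2 * prod_encode (m, hn h))) (verts H - \<psi> m ` verts T)"
      using hn by (auto simp: inj_on_def)
    moreover have "f ` X \<inter> (\<lambda>h. Suc (2 * prod_encode (m, hn h))) ` Y = {}" for X Y
      by (auto simp: f_def) presburger
    ultimately have "inj_on (\<alpha> m) (\<psi> m ` verts T \<union> (verts H - \<psi> m ` verts T))"
      unfolding \<alpha>_def by (intro inj_on_disjoint_Un) (auto simp: image_image)
    then show ?thesis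
      by (rule inj_on_subset) auto
  qed
  have common: "(\<Inter>m<k. \<alpha> m ` verts H) \<subseteq> f ` verts T"
  proof (rule subsetI, rule ccontr)
    fix z assume z: "z \<in> (\<Inter>m<k. \<alpha> m ` verts H)"
    assume z_f: "z \<notin> f ` verts T"
    have "fst (prod_decode (z div 2)) = m" if "m < k" for m
    proof -
      have "z \<in> \<alpha> m ` verts H" using z that by simp
      then obtain h where h: "z = \<alpha> m h" by (rule imageE)
      moreover have "h \<notin> \<psi> m ` verts T" using z_f \<alpha>_\<psi>[OF that] h by auto
      ultimately show ?thesis by (simp add: \<alpha>_def)
    qed
    from this[of 0] this[of 1] k show False by simp
  qed
  show ?thesis
    using inj_f inj_\<alpha> \<alpha>_\<psi> common by (intro that) auto
qed

lemma int_reaches_if_separating_embeddings: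
  fixes T :: "'b graph" and H :: "'a graph" and \<phi> :: "'i \<Rightarrow> 'b \<Rightarrow> 'a"
  assumes T: "simple_graph T" and H: "simple_graph H"
    and I: "finite I" "2 \<le> card I"
    and emb: "\<And>i. i \<in> I \<Longrightarrow> graph_embedding (\<phi> i) T H"
    and sep: "\<And>u v. u \<in> verts T \<Longrightarrow> v \<in> verts T \<Longrightarrow> u \<noteq> v \<Longrightarrow> {u, v} \<notin> edges T \<Longrightarrow>
      \<exists>i\<in>I. {\<phi> i u, \<phi> i v} \<notin> edges H"
  shows "int_reaches H T"
proof -
  define k where "k = card I"
  obtain ix where ix: "bij_betw ix {..<k} I"
    using ex_bij_betw_nat_finite[OF I(1)] by (auto simp: k_def atLeast0LessThan)
  define \<psi> where "\<psi> m = \<phi> (ix m)" for m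
  have emb_\<psi>: "graph_embedding (\<psi> m) T H" if "m < k" for m
    using emb ix that by (auto simp: \<psi>_def bij_betw_def)
  have sep_\<psi>: "\<exists>m<k. {\<psi> m u, \<psi> m v} \<notin> edges H"
    if uv: "u \<in> verts T" "v \<in> verts T" "u \<noteq> v" "{u, v} \<notin> edges T" for u v
  proof -
    obtain i where "i \<in> I" "{\<phi> i u, \<phi> i v} \<notin> edges H" using sep[OF uv] by blast
    with ix show ?thesis by (auto simp: \<psi>_def bij_betw_def)
  qed
  have fin: "finite (verts T)" "finite (verts H)"
    using T H by (simp_all add: simple_graph_def)
  have k: "2 \<le> k" using I(2) by (simp add: k_def)
  have inj_\<psi>: "inj_on (\<psi> m) (verts T)" if "m < k" for m
    using emb_\<psi>[OF that] by (simp add: graph_embedding_def)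
  obtain f :: "'b \<Rightarrow> nat" and \<alpha> :: "nat \<Rightarrow> 'a \<Rightarrow> nat"
    where lab: "inj_on f (verts T)" "\<forall>m<k. inj_on (\<alpha> m) (verts H)"
      "\<forall>m<k. \<forall>v\<in>verts T. \<alpha> m (\<psi> m v) = f v" "(\<Inter>m<k. \<alpha> m ` verts H) \<subseteq> f ` verts T"
    using fin k inj_\<psi> by (rule obtain_common_labelling)
  have "graph_iso T (ginter_images k \<alpha> H)"
    using k lab sep_\<psi> emb_\<psi> by (intro graph_iso_ginter_images[OF T H]) auto
  with k lab(2) show ?thesis
    unfolding int_reaches_def by (intro exI[of _ k] conjI) auto
qed

section \<open>The forest tS_{t,t,t}\<close>

(* The vertex at depth l on leg j of copy i; at depth 0 this is the centre (i, 0, 0) for every j. *)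
definition tS_vert :: "nat \<Rightarrow> nat \<Rightarrow> nat \<Rightarrow> nat \<times> nat \<times> nat" where
  "tS_vert i j l = (i, if l = 0 then (0, 0) else (j, l))"

lemma tS_vert_simps [simp]:
  "fst (tS_vert i j l) = i" "snd (snd (tS_vert i j l)) = l"
  "fst (snd (tS_vert i j l)) = (if l = 0 then 0 else j)"
  by (simp_all add: tS_vert_def)

lemma spider_ttt: "spider t t t =
    (insert (0, 0) {(j, l). j \<in> {1, 2, 3} \<and> 1 \<le> l \<and> l \<le> t},
     {{(0, 0), (j, 1)} | j. j \<in> {1, 2, 3} \<and> 1 \<le> t} \<union>
     {{(j, l), (j, Suc l)} | j l. j \<in> {1, 2, 3} \<and> 1 \<le> l \<and> Suc l \<le> t})"
  by (simp only: spider_def Let_def if_cancel Suc_eq_plus1)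

lemma mem_verts_tSttt:
  "(i, j, l) \<in> verts (tSttt t) \<longleftrightarrow> i < t \<and> l \<le> t \<and> (if l = 0 then j = 0 else j \<in> {1, 2, 3})"
  by (auto simp: tSttt_def spider_ttt verts_def)

lemma tS_vert_mem_verts [simp]:
  "tS_vert i j l \<in> verts (tSttt t) \<longleftrightarrow> i < t \<and> l \<le> t \<and> (l = 0 \<or> j \<in> {1, 2, 3})"
  by (simp add: tS_vert_def mem_verts_tSttt)

lemma tSttt_edgeE:
  assumes "e \<in> edges (tSttt t)"
  obtains i j l where "i < t" "j \<in> {1, 2, 3}" "l < t" "e = {tS_vert i j l, tS_vert i j (Suc l)}"
proof -
  obtain i e' where i: "i < t" and e: "e = Pair i ` e'" and "e' \<in> edges (spider t t t)"
    using assms by (auto simp: tSttt_def edges_def[of "(_, _)"])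
  then consider j where "j \<in> {1, 2, 3}" "1 \<le> t" "e' = {(0, 0), (j, 1)}"
    | j l where "j \<in> {1, 2, 3}" "1 \<le> l" "Suc l \<le> t" "e' = {(j, l), (j, Suc l)}"
    unfolding spider_ttt edges_def snd_conv by blast
  then show ?thesis
  proof cases
    case (1 j)
    with e have "e = {tS_vert i j 0, tS_vert i j (Suc 0)}"
      by (simp add: tS_vert_def)
    with 1(1) i show ?thesis by (rule_tac that) simp_all
  next
    case (2 j l)
    with e have "e = {tS_vert i j l, tS_vert i j (Suc l)}"
      by (simp add: tS_vert_def)
    with 2(1,3) i show ?thesis by (rule_tac that) simp_all
  qed
qed

lemma tS_vert_edge:
  assumes i: "i < t" and j: "j \<in> {1, 2, 3}" and l: "l < t"
  shows "{tS_vert i j l, tS_vert i j (Suc l)} \<in> edges (tSttt t)"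
proof -
  define e' where "e' = (if l = 0 then {(0, 0), (j, 1)} else {(j, l), (j, Suc l)})"
  have "e' \<in> edges (spider t t t)"
  proof (cases "l = 0")
    case True
    then show ?thesis
      using j l by (auto simp: e'_def spider_ttt edges_def)
  next
    case False
    then have "1 \<le> l" "Suc l \<le> t" using l by auto
    with j show ?thesis
      unfolding e'_def if_not_P[OF False] spider_ttt edges_def snd_conv by blast
  qed
  moreover have "{tS_vert i j l, tS_vert i j (Suc l)} = Pair i ` e'"
    by (simp add: e'_def tS_vert_def)
  ultimately show ?thesis
    using i unfolding tSttt_def edges_def[of "(_, _)"] by auto
qed

lemma verts_tSttt: "verts (tSttt t) = {..<t} \<times> insert (0, 0) ({1, 2, 3} \<times> {1..t})"
  by (auto simp: tSttt_def spider_ttt verts_def)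

lemma card_verts_tSttt: "card (verts (tSttt t)) = 3 * t^2 + t"
proof -
  have "card (insert (0, 0) ({1, 2, 3} \<times> {1..t}) :: (nat \<times> nat) set) = Suc (3 * t)"
    by (simp add: card_cartesian_product)
  then show ?thesis
    by (simp add: verts_tSttt card_cartesian_product power2_eq_square algebra_simps)
qed

lemma simple_graph_tSttt: "simple_graph (tSttt t)"
  unfolding simple_graph_def
proof
  show "finite (verts (tSttt t))" by (simp add: verts_tSttt)
  show "\<forall>e\<in>edges (tSttt t). \<exists>u v. u \<noteq> v \<and> e = {u, v} \<and> u \<in> verts (tSttt t) \<and> v \<in> verts (tSttt t)"
  proof
    fix e assume "e \<in> edges (tSttt t)"
    then obtain i j l where "i < t" "j \<in> {1, 2, 3}" "l < t" "e = {tS_vert i j l, tS_vert i j (Suc l)}"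
      by (rule tSttt_edgeE)
    moreover have "tS_vert i j l \<noteq> tS_vert i j (Suc l)"
      by (simp add: tS_vert_def)
    moreover have "tS_vert i j l \<in> verts (tSttt t)" "tS_vert i j (Suc l) \<in> verts (tSttt t)"
      using calculation by simp_all
    ultimately show "\<exists>u v. u \<noteq> v \<and> e = {u, v} \<and> u \<in> verts (tSttt t) \<and> v \<in> verts (tSttt t)"
      by blast
  qed
qed

lemma card_leg_vertices:
  assumes "1 \<le> t"
  shows "2 \<le> card {u \<in> verts (tSttt t). snd (snd u) \<noteq> 0}"
proof -
  have "finite {u \<in> verts (tSttt t). snd (snd u) \<noteq> 0}"
    by (simp add: verts_tSttt)
  moreover have "{tS_vert 0 1 1, tS_vert 0 2 1} \<subseteq> {u \<in> verts (tSttt t). snd (snd u) \<noteq> 0}"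
    using assms by simp
  ultimately have "card {tS_vert 0 1 1, tS_vert 0 2 1} \<le> card {u \<in> verts (tSttt t). snd (snd u) \<noteq> 0}"
    by (rule card_mono)
  then show ?thesis
    by (simp add: tS_vert_def)
qed

definition separating_embedding :: "'a graph \<Rightarrow> nat \<Rightarrow> nat \<times> nat \<times> nat \<Rightarrow> (nat \<times> nat \<times> nat \<Rightarrow> 'a) \<Rightarrow> bool"
  where "separating_embedding H t u \<phi> \<longleftrightarrow> graph_embedding \<phi> (tSttt t) H \<and>
     (\<forall>w\<in>verts (tSttt t). {\<phi> u, \<phi> w} \<in> edges H \<longrightarrow> {u, w} \<in> edges (tSttt t)) \<and>
     (\<forall>i<t. \<forall>i'<t. {\<phi> (i, 0, 0), \<phi> (i', 0, 0)} \<notin> edges H)"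

lemma int_reaches_tSttt_if_separating_embeddings:
  assumes H: "simple_graph H" and t: "1 \<le> t"
    and leg: "\<And>u. u \<in> verts (tSttt t) \<Longrightarrow> snd (snd u) \<noteq> 0 \<Longrightarrow> \<exists>\<phi>. separating_embedding H t u \<phi>"
  shows "int_reaches H (tSttt t)"
proof -
  define I where "I = {u \<in> verts (tSttt t). snd (snd u) \<noteq> 0}"
  obtain \<Phi> where "\<forall>u\<in>I. separating_embedding H t u (\<Phi> u)"
    using bchoice[of I "separating_embedding H t"] leg by (auto simp: I_def)
  then have \<Phi>_emb: "graph_embedding (\<Phi> u) (tSttt t) H"
    and \<Phi>_nbhd: "w \<in> verts (tSttt t) \<Longrightarrow> {\<Phi> u u, \<Phi> u w} \<in> edges H \<Longrightarrow> {u, w} \<in> edges (tSttt t)"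
    and \<Phi>_centres: "i < t \<Longrightarrow> i' < t \<Longrightarrow> {\<Phi> u (i, 0, 0), \<Phi> u (i', 0, 0)} \<notin> edges H"
    if "u \<in> I" for u w i i'
    using that by (auto simp: separating_embedding_def)
  have "finite I" by (simp add: I_def verts_tSttt)
  moreover have "2 \<le> card I"
    using card_leg_vertices[OF t] by (simp add: I_def)
  moreover have "\<exists>c\<in>I. {\<Phi> c u, \<Phi> c v} \<notin> edges H"
    if uv: "u \<in> verts (tSttt t)" "v \<in> verts (tSttt t)" "{u, v} \<notin> edges (tSttt t)" for u v
  proof -
    consider "u \<in> I" | "v \<in> I" | "\<exists>i i'. i < t \<and> i' < t \<and> u = (i, 0, 0) \<and> v = (i', 0, 0)"
      using uv(1,2) by (cases u, cases v) (auto simp: I_def mem_verts_tSttt split: if_splits)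
    then show ?thesis
    proof cases
      case 1
      then show ?thesis using \<Phi>_nbhd uv(2,3) by blast
    next
      case 2
      then show ?thesis using \<Phi>_nbhd[of v u] uv(1,3) by (auto simp: insert_commute)
    next
      case 3
      have "tS_vert 0 1 1 \<in> I" using t by (simp add: I_def)
      with 3 show ?thesis using \<Phi>_centres by blast
    qed
  qed
  ultimately show ?thesis
    using simple_graph_tSttt H \<Phi>_emb
    by (rule_tac int_reaches_if_separating_embeddings[where \<phi> = \<Phi> and I = I]) auto
qed

section \<open>Injections into a complete bipartite graph\<close>

lemma obtain_inj_on_extension:
  assumes "finite U" "finite S" "card U \<le> card S" "D \<subseteq> U" "inj_on h D" "h ` D \<subseteq> S"
  obtains g where "inj_on g U" "g ` U \<subseteq> S" "\<forall>d\<in>D. g d = h d"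
proof -
  have fin_D: "finite D" using assms(1,4) by (rule finite_subset[rotated])
  have "card (U - D) = card U - card D"
    using fin_D assms(4) by (rule card_Diff_subset)
  moreover have "card (S - h ` D) = card S - card D"
    using assms(5,6) fin_D by (simp add: card_Diff_subset card_image)
  ultimately have "card (U - D) \<le> card (S - h ` D)"
    using assms(3) by linarith
  then obtain f where f: "f ` (U - D) \<subseteq> S - h ` D" "inj_on f (U - D)"
    using card_le_inj[of "U - D" "S - h ` D"] assms(1,2) by auto
  define g where "g u = (if u \<in> D then h u else f u)" for u
  have "inj_on g U"
    using f assms(5) by (auto simp: g_def inj_on_def)
  moreover have "g ` U \<subseteq> S"
    using f assms(6) by (auto simp: g_def)
  ultimately show ?thesis
    by (rule that) (simp add: g_def)
qed

lemma obtain_bipartite_injection: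
  assumes "finite V" "finite A" "finite B" "A \<inter> B = {}" "card V \<le> card A" "card V \<le> card B"
    and "D \<subseteq> V" "inj_on h D" "\<forall>d\<in>D. h d \<in> (if P d then A else B)"
  obtains g where "inj_on g V" "\<forall>v\<in>V. g v \<in> (if P v then A else B)" "\<forall>d\<in>D. g d = h d"
proof -
  have sub: "D \<inter> Collect P \<subseteq> V" "D - Collect P \<subseteq> V"
    and inj: "inj_on h (D \<inter> Collect P)" "inj_on h (D - Collect P)"
    using assms(7,8) by (auto intro: inj_on_subset)
  have img: "h ` (D \<inter> Collect P) \<subseteq> A" "h ` (D - Collect P) \<subseteq> B"
    using assms(9) by (metis (mono_tags) Diff_iff IntD1 IntD2 image_subset_iff mem_Collect_eq)+
  obtain gA where gA: "inj_on gA V" "gA ` V \<subseteq> A" "\<forall>d\<in>D \<inter> Collect P. gA d = h d"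
    using assms(1,2,5) sub(1) inj(1) img(1) by (rule obtain_inj_on_extension)
  obtain gB where gB: "inj_on gB V" "gB ` V \<subseteq> B" "\<forall>d\<in>D - Collect P. gB d = h d"
    using assms(1,3,6) sub(2) inj(2) img(2) by (rule obtain_inj_on_extension)
  define g where "g v = (if P v then gA v else gB v)" for v
  have "inj_on g V"
  proof (rule inj_onI)
    fix v w assume vw: "v \<in> V" "w \<in> V" "g v = g w"
    show "v = w"
    proof (cases "P v = P w")
      case True
      with vw gA(1) gB(1) show ?thesis by (auto simp: g_def inj_on_eq_iff split: if_splits)
    next
      case False
      with vw gA(2) gB(2) assms(4) show ?thesis by (auto simp: g_def split: if_splits)
    qed
  qed
  moreover have "\<forall>v\<in>V. g v \<in> (if P v then A else B)"
    using gA gB by (auto simp: g_def)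
  moreover have "\<forall>d\<in>D. g d = h d"
    using gA(3) gB(3) by (simp add: g_def)
  ultimately show ?thesis
    by (rule that)
qed

section \<open>Embedding tS_{t,t,t} through a leg vertex\<close>

locale biclique_with_path =
  fixes H :: "'a graph" and A B :: "'a set" and ps :: "'a list" and a b :: 'a and t :: nat
  assumes simple_H: "simple_graph H"
    and disjoint_AB: "A \<inter> B = {}" and finite_A: "finite A" and finite_B: "finite B"
    and card_A: "3 * t^2 + t \<le> card A" and card_B: "3 * t^2 + t \<le> card B"
    and independent_A: "independent H A" and independent_B: "independent H B"
    and complete_AB: "complete_to H A B"
    and AB_verts: "A \<union> B \<subseteq> verts H"
    and path_verts: "set ps \<subseteq> verts H" and distinct_path: "distinct ps"
    and length_path: "2 \<le> length ps" and path_AB: "set ps \<inter> (A \<union> B) = {}"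
    and path_edge: "\<And>i. Suc i < length ps \<Longrightarrow> {ps ! i, ps ! Suc i} \<in> edges H"
    and a_AB: "a \<in> A \<union> B" and hd_a: "{hd ps, a} \<in> edges H"
    and b_AB: "b \<in> A \<union> B" and b_ne_a: "b \<noteq> a" and last_b: "{last ps, b} \<in> edges H"
    and nbhd_hd: "nbhd H (hd ps) \<subseteq> {a, ps ! 1}"
begin

lemma path_ne_Nil: "ps \<noteq> []"
  using length_path by auto

end

(* The embedding emb through the leg vertex tS_vert s j l lays leg j of copy s, from depth l
  on, along ps; the flanking leg vertices pre and post go to a and b. All other vertices go
  injectively into A \<union> B, on the side given by in_A: the parity of the depth, anchored at pre
  (the side of a) before the path and at post (the side of b) beyond it. *)
locale leg_embedding = biclique_with_path +
  fixes s j l :: nat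
  assumes s_less: "s < t" and j_leg: "j \<in> {1, 2, 3}" and l_range: "1 \<le> l" "l \<le> t"
begin

definition on_path :: "nat \<times> nat \<times> nat \<Rightarrow> bool" where
  "on_path v \<longleftrightarrow> fst v = s \<and> fst (snd v) = j \<and> l \<le> snd (snd v) \<and> snd (snd v) < l + length ps"

definition beyond :: "nat \<times> nat \<times> nat \<Rightarrow> bool" where
  "beyond v \<longleftrightarrow> fst v = s \<and> fst (snd v) = j \<and> l + length ps \<le> snd (snd v)"

definition in_A :: "nat \<times> nat \<times> nat \<Rightarrow> bool" where
  "in_A v \<longleftrightarrow> (if beyond v then b \<in> A \<longleftrightarrow> even (snd (snd v) + l + length ps)
                else a \<in> A \<longleftrightarrow> even (snd (snd v) + l + 1))"

definition pre :: "nat \<times> nat \<times> nat" where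
  "pre = tS_vert s j (l - 1)"

(* post is a vertex of tS_{t,t,t} only if l + length ps \<le> t. *)
definition post :: "nat \<times> nat \<times> nat" where
  "post = tS_vert s j (l + length ps)"

lemma on_path_tS_vert [simp]:
  "on_path (tS_vert i j' d) \<longleftrightarrow> i = s \<and> j' = j \<and> l \<le> d \<and> d < l + length ps"
  using l_range by (auto simp: on_path_def)

lemma beyond_tS_vert [simp]:
  "beyond (tS_vert i j' d) \<longleftrightarrow> i = s \<and> j' = j \<and> l + length ps \<le> d"
  using l_range length_path by (auto simp: beyond_def)

lemma on_path_conv: "on_path v \<Longrightarrow> v = tS_vert s j (snd (snd v))"
  using l_range by (cases v) (auto simp: on_path_def tS_vert_def)

lemma in_A_tS_vert_Suc:
  assumes "beyond (tS_vert i j' d) = beyond (tS_vert i j' (Suc d))"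
  shows "in_A (tS_vert i j' d) \<noteq> in_A (tS_vert i j' (Suc d))"
  using assms by (simp add: in_A_def)

lemma pre_mem: "pre \<in> verts (tSttt t)"
  using s_less j_leg l_range by (simp add: pre_def)

lemma in_A_pre: "in_A pre \<longleftrightarrow> a \<in> A"
  using l_range by (auto simp: pre_def in_A_def)

lemma in_A_post: "in_A post \<longleftrightarrow> b \<in> A"
  by (simp add: post_def in_A_def) blast

lemma pre_ne_post: "pre \<noteq> post"
  using length_path by (auto simp: pre_def post_def dest: arg_cong[where f = "\<lambda>v. snd (snd v)"])

definition admissible_off_path_map :: "(nat \<times> nat \<times> nat \<Rightarrow> 'a) \<Rightarrow> bool" where
  "admissible_off_path_map g \<longleftrightarrow> inj_on g (verts (tSttt t)) \<and>
     (\<forall>v\<in>verts (tSttt t). g v \<in> (if in_A v then A else B)) \<and>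
     g pre = a \<and> (post \<in> verts (tSttt t) \<longrightarrow> g post = b)"

lemma ex_admissible_off_path_map: "\<exists>g. admissible_off_path_map g"
proof -
  define D where "D = {pre} \<union> ({post} \<inter> verts (tSttt t))"
  define h where "h v = (if v = pre then a else b)" for v
  have "card (verts (tSttt t)) \<le> card A" "card (verts (tSttt t)) \<le> card B"
    using card_A card_B by (simp_all add: card_verts_tSttt)
  moreover have "D \<subseteq> verts (tSttt t)"
    using pre_mem by (simp add: D_def)
  moreover have "inj_on h D"
    using pre_ne_post b_ne_a unfolding inj_on_def D_def h_def by auto
  moreover have "\<forall>d\<in>D. h d \<in> (if in_A d then A else B)"
    using in_A_pre in_A_post a_AB b_AB pre_ne_post by (auto simp: D_def h_def)
  ultimately obtain g where g: "inj_on g (verts (tSttt t))"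
    "\<forall>v\<in>verts (tSttt t). g v \<in> (if in_A v then A else B)" and "\<forall>d\<in>D. g d = h d"
    using finite_A finite_B disjoint_AB
    by (rule_tac obtain_bipartite_injection[of "verts (tSttt t)" A B D h in_A])
      (simp_all add: verts_tSttt)
  then have "g pre = a" "post \<in> verts (tSttt t) \<longrightarrow> g post = b"
    using pre_ne_post by (simp_all add: D_def h_def)
  with g show ?thesis
    unfolding admissible_off_path_map_def by blast
qed

definition off_path_map :: "nat \<times> nat \<times> nat \<Rightarrow> 'a" where
  "off_path_map = (SOME g. admissible_off_path_map g)"

lemma off_path_map:
  "inj_on off_path_map (verts (tSttt t))"
  "\<forall>v\<in>verts (tSttt t). off_path_map v \<in> (if in_A v then A else B)"
  "off_path_map pre = a" "post \<in> verts (tSttt t) \<Longrightarrow> off_path_map post = b"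
proof -
  have "admissible_off_path_map off_path_map"
    unfolding off_path_map_def using ex_admissible_off_path_map by (rule someI_ex)
  then show "inj_on off_path_map (verts (tSttt t))"
    "\<forall>v\<in>verts (tSttt t). off_path_map v \<in> (if in_A v then A else B)"
    "off_path_map pre = a" "post \<in> verts (tSttt t) \<Longrightarrow> off_path_map post = b"
    unfolding admissible_off_path_map_def by blast+
qed

definition emb :: "nat \<times> nat \<times> nat \<Rightarrow> 'a" where
  "emb v = (if on_path v then ps ! (snd (snd v) - l) else off_path_map v)"

lemma emb_on_path: "on_path v \<Longrightarrow> emb v \<in> set ps"
  by (auto simp: emb_def on_path_def)

lemma emb_off_path:
  "v \<in> verts (tSttt t) \<Longrightarrow> \<not> on_path v \<Longrightarrow> emb v \<in> (if in_A v then A else B)"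
  using off_path_map(2) by (simp add: emb_def)

lemma emb_off_path_AB:
  assumes "v \<in> verts (tSttt t)" "\<not> on_path v"
  shows "emb v \<in> A \<union> B"
  using emb_off_path[OF assms] by (cases "in_A v") auto

lemma emb_leg_vertex: "emb (tS_vert s j l) = hd ps"
  using l_range path_ne_Nil by (simp add: emb_def hd_conv_nth)

lemma emb_pre: "emb pre = a"
  using off_path_map(3) l_range by (auto simp: emb_def pre_def)

lemma emb_post: "post \<in> verts (tSttt t) \<Longrightarrow> emb post = b"
  using off_path_map(4) by (simp add: emb_def post_def)

lemma inj_on_emb: "inj_on emb (verts (tSttt t))"
proof (rule inj_onI)
  fix v w assume vw: "v \<in> verts (tSttt t)" "w \<in> verts (tSttt t)" "emb v = emb w"
  consider "on_path v" "on_path w" | "on_path v \<noteq> on_path w" | "\<not> on_path v" "\<not> on_path w"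
    by blast
  then show "v = w"
  proof cases
    case 1
    then have "ps ! (snd (snd v) - l) = ps ! (snd (snd w) - l)"
      "snd (snd v) - l < length ps" "snd (snd w) - l < length ps"
      using vw(3) by (auto simp: emb_def on_path_def)
    then have "snd (snd v) - l = snd (snd w) - l"
      using distinct_path by (simp add: nth_eq_iff_index_eq)
    with 1 have "snd (snd v) = snd (snd w)"
      by (auto simp: on_path_def)
    then show ?thesis
      using on_path_conv[OF 1(1)] on_path_conv[OF 1(2)] by simp
  next
    case 2
    then have "emb v \<in> set ps \<inter> (A \<union> B)"
      using vw emb_on_path[of v] emb_on_path[of w] emb_off_path_AB[of v] emb_off_path_AB[of w]
      by (cases "on_path v") simp_all
    with path_AB show ?thesis by simp
  next
    case 3
    with vw off_path_map(1) show ?thesis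
      by (simp add: emb_def inj_on_eq_iff)
  qed
qed

lemma emb_verts: "emb ` verts (tSttt t) \<subseteq> verts H"
proof (rule image_subsetI)
  fix v assume "v \<in> verts (tSttt t)"
  then show "emb v \<in> verts H"
    using emb_on_path[of v] emb_off_path_AB[of v] path_verts AB_verts by (cases "on_path v") auto
qed

lemma emb_edge_off_path:
  assumes "v \<in> verts (tSttt t)" "w \<in> verts (tSttt t)" "\<not> on_path v" "\<not> on_path w"
    and "in_A v \<noteq> in_A w"
  shows "{emb v, emb w} \<in> edges H"
proof -
  have "emb v \<in> A \<and> emb w \<in> B \<or> emb v \<in> B \<and> emb w \<in> A"
    using emb_off_path[OF assms(1,3)] emb_off_path[OF assms(2,4)] assms(5) by (auto split: if_splits)
  then show ?thesis
    using complete_AB by (auto simp: complete_to_def insert_commute)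
qed

lemma emb_edge_on_leg:
  assumes d: "d < t"
  shows "{emb (tS_vert s j d), emb (tS_vert s j (Suc d))} \<in> edges H"
proof -
  let ?v = "tS_vert s j d" and ?w = "tS_vert s j (Suc d)"
  have vw: "?v \<in> verts (tSttt t)" "?w \<in> verts (tSttt t)"
    using s_less j_leg d by simp_all
  consider "Suc d < l" | "Suc d = l" | "l \<le> d" "Suc d < l + length ps"
    | "Suc d = l + length ps" | "l + length ps \<le> d"
    by linarith
  then show ?thesis
  proof cases
    case 2
    then have "?v = pre" "emb ?w = hd ps"
      using length_path by (auto simp: pre_def emb_def hd_conv_nth)
    then show ?thesis
      using hd_a emb_pre by (simp add: insert_commute)
  next
    case 3
    then show ?thesis
      using path_edge[of "d - l"] by (simp add: emb_def Suc_diff_le)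
  next
    case 4
    then have "d - l = length ps - 1" by linarith
    with 4 path_ne_Nil length_path have "emb ?v = last ps" "?w = post"
      by (auto simp: emb_def post_def last_conv_nth)
    then show ?thesis
      using last_b emb_post vw(2) by simp
  qed (use emb_edge_off_path[OF vw] in_A_tS_vert_Suc in auto)
qed

lemma emb_edge:
  assumes "e \<in> edges (tSttt t)"
  shows "emb ` e \<in> edges H"
proof -
  obtain i j' d where i: "i < t" and j': "j' \<in> {1, 2, 3}" and d: "d < t"
    and e: "e = {tS_vert i j' d, tS_vert i j' (Suc d)}"
    using assms by (rule tSttt_edgeE)
  have "{emb (tS_vert i j' d), emb (tS_vert i j' (Suc d))} \<in> edges H"
  proof (cases "i = s \<and> j' = j")
    case True
    with d show ?thesis by (simp add: emb_edge_on_leg)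
  next
    case False
    have "tS_vert i j' d \<in> verts (tSttt t)" "tS_vert i j' (Suc d) \<in> verts (tSttt t)"
      using i j' d by simp_all
    moreover have "\<not> on_path (tS_vert i j' d)" "\<not> on_path (tS_vert i j' (Suc d))"
      using False by auto
    moreover have "in_A (tS_vert i j' d) \<noteq> in_A (tS_vert i j' (Suc d))"
      using False by (intro in_A_tS_vert_Suc) auto
    ultimately show ?thesis
      by (rule emb_edge_off_path)
  qed
  with e show ?thesis by simp
qed

lemma graph_embedding_emb: "graph_embedding emb (tSttt t) H"
  unfolding graph_embedding_def using inj_on_emb emb_verts emb_edge by blast

lemma emb_nbhd_hd_cases:
  assumes w: "w \<in> verts (tSttt t)" and edge: "{hd ps, emb w} \<in> edges H"
  shows "w = pre \<or> w = tS_vert s j (Suc l) \<and> l < t"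
proof -
  have "emb w \<in> {a, ps ! 1}"
    using nbhd_hd edge by (auto simp: nbhd_def)
  then consider "emb w = a" | "emb w = ps ! 1" by blast
  then show ?thesis
  proof cases
    case 1
    have "a \<notin> set ps" using a_AB path_AB by auto
    with 1 have "\<not> on_path w" using emb_on_path by metis
    with 1 have "emb w = emb pre"
      using emb_pre by simp
    then show ?thesis
      using inj_on_emb w pre_mem by (simp add: inj_on_eq_iff)
  next
    case 2
    have "ps ! 1 \<in> set ps" using length_path by simp
    then have "ps ! 1 \<notin> A \<union> B" using path_AB by auto
    with 2 have path: "on_path w" using emb_off_path_AB w by metis
    then have "ps ! (snd (snd w) - l) = ps ! 1" "snd (snd w) - l < length ps"
      using 2 by (auto simp: emb_def on_path_def)
    then have "snd (snd w) - l = 1"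
      using distinct_path length_path by (simp add: nth_eq_iff_index_eq)
    with path have "snd (snd w) = Suc l"
      by (auto simp: on_path_def)
    then have "w = tS_vert s j (Suc l)"
      using on_path_conv[OF path] by simp
    with w show ?thesis by simp
  qed
qed

lemma emb_nbhd_hd:
  assumes "w \<in> verts (tSttt t)" "{hd ps, emb w} \<in> edges H"
  shows "{tS_vert s j l, w} \<in> edges (tSttt t)"
  using emb_nbhd_hd_cases[OF assms]
proof
  assume "w = pre"
  moreover have "l - 1 < t" "Suc (l - 1) = l" using l_range by simp_all
  ultimately show ?thesis
    using tS_vert_edge[OF s_less j_leg, of "l - 1"] by (simp add: pre_def insert_commute)
next
  assume "w = tS_vert s j (Suc l) \<and> l < t"
  then show ?thesis
    using tS_vert_edge[OF s_less j_leg, of l] by simp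
qed

lemma emb_centres_nonadjacent:
  assumes "i < t" "i' < t"
  shows "{emb (i, 0, 0), emb (i', 0, 0)} \<notin> edges H"
proof -
  have "(i, 0, 0) = tS_vert i j 0" "(i', 0, 0) = tS_vert i' j 0"
    by (simp_all add: tS_vert_def)
  then have "\<not> on_path (i, 0, 0)" "\<not> on_path (i', 0, 0)" "in_A (i, 0, 0) = in_A (i', 0, 0)"
    using l_range by (simp_all add: in_A_def)
  moreover have "(i, 0, 0) \<in> verts (tSttt t)" "(i', 0, 0) \<in> verts (tSttt t)"
    using assms by (simp_all add: mem_verts_tSttt)
  ultimately have "emb (i, 0, 0) \<in> A \<and> emb (i', 0, 0) \<in> A \<or> emb (i, 0, 0) \<in> B \<and> emb (i', 0, 0) \<in> B"
    using emb_off_path[of "(i, 0, 0)"] emb_off_path[of "(i', 0, 0)"] by (cases "in_A (i, 0, 0)") auto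
  then show ?thesis
    using independent_A independent_B by (auto simp: independent_def)
qed

lemma separating_embedding_emb: "separating_embedding H t (tS_vert s j l) emb"
  unfolding separating_embedding_def
  using graph_embedding_emb emb_leg_vertex emb_nbhd_hd emb_centres_nonadjacent by simp

end

lemma (in biclique_with_path) ex_separating_embedding:
  assumes "u \<in> verts (tSttt t)" "snd (snd u) \<noteq> 0"
  shows "\<exists>\<phi>. separating_embedding H t u \<phi>"
proof -
  obtain s j l where u: "u = (s, j, l)" by (cases u)
  with assms have "s < t" "j \<in> {1, 2, 3}" "1 \<le> l" "l \<le> t"
    by (auto simp: mem_verts_tSttt)
  then interpret leg_embedding H A B ps a b t s j l
    by unfold_locales
  have "u = tS_vert s j l"
    using u l_range by (simp add: tS_vert_def)
  with separating_embedding_emb show ?thesis by blast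
qed

section \<open>From the hypotheses to a biclique with a path\<close>

lemma obtain_path_list:
  assumes "is_path_ends (induced H C) x y"
  obtains ps where "distinct ps" "set ps = C" "hd ps = x" "last ps = y"
    "\<forall>i. Suc i < length ps \<longrightarrow> {ps ! i, ps ! Suc i} \<in> edges H"
proof -
  obtain ps where ps: "distinct ps" "set ps = C" "hd ps = x" "last ps = y"
    and E: "{e \<in> edges H. e \<subseteq> C} = {{ps ! i, ps ! (i + 1)} | i. i + 1 < length ps}"
    using assms by (auto simp: is_path_ends_def induced_def verts_def edges_def)
  have "{ps ! i, ps ! Suc i} \<in> edges H" if "Suc i < length ps" for i
  proof -
    have "{ps ! i, ps ! Suc i} \<in> {{ps ! i, ps ! (i + 1)} | i. i + 1 < length ps}"
      using that by auto
    then show ?thesis unfolding E[symmetric] by blast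
  qed
  with ps show ?thesis by (rule_tac that) auto
qed

lemma nbhd_eq_if_degree_two:
  assumes "degree H x = 2" "u \<in> nbhd H x" "v \<in> nbhd H x" "u \<noteq> v"
  shows "nbhd H x = {u, v}"
proof -
  have "finite (nbhd H x)"
    using assms(1) by (metis card.infinite degree_def zero_neq_numeral)
  moreover have "{u, v} \<subseteq> nbhd H x" "card {u, v} = card (nbhd H x)"
    using assms by (simp_all add: degree_def)
  ultimately show ?thesis
    by (metis card_subset_eq)
qed

lemma obtain_biclique_with_path:
  assumes "simple_graph H"
    and "verts H = A \<union> B \<union> C"
    and "A \<inter> B = {}" and "A \<inter> C = {}" and "B \<inter> C = {}"
    and "independent H A" and "independent H B"
    and "card A = 3 * t^2 + t" and "card B = 3 * t^2 + t"
    and "complete_to H A B"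
    and "card C \<ge> 2" and "is_path_ends (induced H C) x y"
    and "nbhd H x \<inter> (A \<union> B) \<noteq> {}" and "nbhd H y \<inter> (A \<union> B) \<noteq> {}"
    and "degree H x = 2"
    and "nbhd H x \<inter> (A \<union> B) \<noteq> nbhd H y \<inter> (A \<union> B)"
  obtains ps a b where "biclique_with_path H A B ps a b t"
proof -
  obtain ps where ps: "distinct ps" "set ps = C" "hd ps = x" "last ps = y"
    and path: "\<forall>i. Suc i < length ps \<longrightarrow> {ps ! i, ps ! Suc i} \<in> edges H"
    using assms(12) by (rule obtain_path_list)
  have len: "2 \<le> length ps"
    using assms(11) distinct_card[OF ps(1)] ps(2) by simp
  then have "x = ps ! 0"
    using ps(3) by (cases ps) auto
  with len ps(2) path have x1: "ps ! 1 \<in> nbhd H x" "ps ! 1 \<in> C"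
    by (auto simp: nbhd_def)
  obtain a where a: "a \<in> nbhd H x" "a \<in> A \<union> B"
    using assms(13) by blast
  have "a \<noteq> ps ! 1"
    using a(2) x1(2) assms(4,5) by auto
  with assms(15) a(1) x1(1) have nbhd_x: "nbhd H x = {a, ps ! 1}"
    by (rule nbhd_eq_if_degree_two)
  with a(2) x1(2) assms(4,5) have "nbhd H x \<inter> (A \<union> B) = {a}"
    by auto
  with assms(14,16) have "\<not> nbhd H y \<inter> (A \<union> B) \<subseteq> {a}"
    by (simp add: subset_singleton_iff)
  then obtain b where b: "b \<in> nbhd H y" "b \<in> A \<union> B" "b \<noteq> a"
    by auto
  have "finite (verts H)"
    using assms(1) by (simp add: simple_graph_def)
  then have "finite A" "finite B"
    using assms(2) by simp_all
  have "biclique_with_path H A B ps a b t"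
  proof
    show "3 * t^2 + t \<le> card A" "3 * t^2 + t \<le> card B"
      using assms(8,9) by simp_all
    show "A \<union> B \<subseteq> verts H" "set ps \<subseteq> verts H" "set ps \<inter> (A \<union> B) = {}"
      using assms(2,4,5) ps(2) by auto
    show "Suc i < length ps \<Longrightarrow> {ps ! i, ps ! Suc i} \<in> edges H" for i
      using path by blast
    show "{hd ps, a} \<in> edges H" "{last ps, b} \<in> edges H"
      using a(1) b(1) ps(3,4) by (simp_all add: nbhd_def)
    show "nbhd H (hd ps) \<subseteq> {a, ps ! 1}"
      using nbhd_x ps(3) by simp
  qed (use assms(1,3,6,7,10) \<open>finite A\<close> \<open>finite B\<close> ps(1) len a(2) b(2,3) in auto)
  then show ?thesis by (rule that)
qed

theorem mainTheorem4:
  fixes H :: "'a graph" and A B C :: "'a set" and x y :: 'a and t :: nat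
  assumes "simple_graph H"
    and "verts H = A \<union> B \<union> C"
    and "A \<inter> B = {}" and "A \<inter> C = {}" and "B \<inter> C = {}"
    and "independent H A" and "independent H B"
    and "card A = 3 * t^2 + t" and "card B = 3 * t^2 + t"
    and "complete_to H A B"
    and "card C \<ge> 2" and "is_path_ends (induced H C) x y"
    and "nbhd H x \<inter> (A \<union> B) \<noteq> {}" and "nbhd H y \<inter> (A \<union> B) \<noteq> {}"
    and "anticomplete_to H (C - {x, y}) (A \<union> B)"
    and "degree H x = 2"
    and "nbhd H x \<inter> (A \<union> B) \<noteq> nbhd H y \<inter> (A \<union> B)"
  shows "int_reaches H (tSttt t)"
proof -
  obtain ps a b where "biclique_with_path H A B ps a b t"
    using assms(1-14,16,17) by (rule obtain_biclique_with_path)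
  then interpret biclique_with_path H A B ps a b t .
  have "1 \<le> t"
  proof (rule ccontr)
    assume "\<not> 1 \<le> t"
    then have "t = 0" by simp
    then have "A \<union> B = {}"
      using finite_A finite_B assms(8,9) by simp
    with a_AB show False by simp
  qed
  with simple_H show ?thesis
    using ex_separating_embedding by (rule int_reaches_tSttt_if_separating_embeddings)
qed

end
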